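(* Let $\mathbf{V}\in\mathbb{R}^{N\times N}$ with $\mathbf{V}\boldsymbol\mu=\boldsymbol\mu$ and $\mathbf{A}\in\mathbb{R}^{T\times N}$ with $\mathbf{1}_T^\top\mathbf{A}=\mathbf{1}_N^\top$. Then $$\mathbb{E}\nabla_{\mathbf{V}}l=\|\mathbf{A}\|_\mu^2\mathbf{V}\operatorname{diag}(\boldsymbol\mu)+(1-\|\mathbf{A}\|_\mu^2)\boldsymbol\mu\boldsymbol\mu^\top-\langle\mathbf{Q},\mathbf{A}\rangle_\mu\mathbf{P}\operatorname{diag}(\boldsymbol\mu)-(1-\langle\mathbf{Q},\mathbf{A}\rangle_\mu)\boldsymbol\mu\boldsymbol\mu^\top,$$ and for every $k\in[N]$, $$\mathbb{E}\nabla_{\mathbf{a}^{(k)}}l=\mu_k(\|\mathbf{V}\|_\mu^2-\|\boldsymbol\mu\|^2)\mathbf{a}^{(k)}+\mu_k\|\boldsymbol\mu\|^2\mathbf{1}-\mu_k\langle\mathbf{V},\mathbf{P}\rangle_\mu\mathbf{q}^{(k)}-\mu_k\|\boldsymbol\mu\|^2(\mathbf{1}-\mathbf{q}^{(k)}).$$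
   Context: Let $\mathbf{P}\in\mathbb{R}^{N\times N}$ have nonnegative entries with columns summing to $1$, and let $\boldsymbol\mu\in\mathbb{R}^N$ be a probability vector with $\mathbf{P}\boldsymbol\mu=\boldsymbol\mu$. Let $\mathbf{Q}=(\mathbf{q}^{(1)},\dots,\mathbf{q}^{(N)})\in\mathbb{R}^{T\times N}$ with each $\mathbf{q}^{(k)}$ a probability vector. Data: $x_1,\dots,x_{T+1}$ i.i.d. with law $\boldsymbol\mu$ on $[N]$, and $x_o\in[N]$ with $\Pr(x_o=n\mid x_{T+1}=k,x_1,\dots,x_T)=\sum_tq^{(k)}_tP_{n,x_t}$; $\mathbf{X}=(\mathbf{e}_{x_1},\dots,\mathbf{e}_{x_T})\in\mathbb{R}^{N\times T}$. The loss is $l=\frac12\|\mathbf{e}_{x_o}-\mathbf{V}\mathbf{X}\mathbf{A}\mathbf{e}_{x_{T+1}}\|^2$, with $\mathbf{a}^{(k)}$ the $k$-th column of $\mathbf{A}$; $\nabla_{\mathbf{V}}l$ and $\nabla_{\mathbf{a}^{(k)}}l$ are its gradients, and $\mathbb{E}$ is expectation over $(x_1,\dots,x_{T+1},x_o)$ with $\mathbf{V},\mathbf{A}$ fixed. For matrices $\mathbf{M},\mathbf{M}'$ with $N$ columns, $\langle\mathbf{M},\mathbf{M}'\rangle_\mu=\operatorname{Tr}(\mathbf{M}\operatorname{diag}(\boldsymbol\mu)\mathbf{M}'^\top)$ and $\|\mathbf{M}\|_\mu^2=\langle\mathbf{M},\mathbf{M}\rangle_\mu$; $\|\boldsymbol\mu\|$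 is Euclidean; $\mathbf{1}$ is the all-ones vector in $\mathbb{R}^T$. *)

theory Defs
  imports "HOL-Analysis.Analysis"
begin

text \<open>Tokens [N] are the finite type 'n, positions [T] the finite type 't.
  Vectors in R^N are real^'n; an R^{a x b} matrix is real^'b^'a (rows first).\<close>

definition diagv :: "real^'n \<Rightarrow> real^'n^'n" where
  "diagv v = (\<chi> i j. if i = j then v $ i else 0)"

definition outerv :: "real^'n \<Rightarrow> real^'m \<Rightarrow> real^'m^'n" where
  "outerv u v = (\<chi> i j. u $ i * v $ j)"

definition muinner :: "real^'n \<Rightarrow> real^'n^'r \<Rightarrow> real^'n^'r \<Rightarrow> real" where
  "muinner mu M M' = trace (M ** diagv mu ** transpose M')"

definition grad :: "('a::real_inner \<Rightarrow> real) \<Rightarrow> 'a \<Rightarrow> 'a" where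
  "grad f x = (THE D. GDERIV f x :> D)"

definition datamat :: "('t::finite \<Rightarrow> 'n::finite) \<Rightarrow> real^'t^'n" where
  "datamat xs = (\<chi> i t. if xs t = i then 1 else 0)"

text \<open>Loss l = 1/2 || e_{x_o} - V X A e_{x_{T+1}} ||^2 with x_{T+1} = k.\<close>
definition loss :: "real^'n^'n \<Rightarrow> real^'n^'t \<Rightarrow> ('t::finite \<Rightarrow> 'n::finite) \<Rightarrow> 'n \<Rightarrow> 'n \<Rightarrow> real" where
  "loss V A xs k xo = (1/2) * (norm (axis xo 1 - (V ** datamat xs ** A) *v axis k 1))^2"

definition setcol :: "'n \<Rightarrow> real^'t \<Rightarrow> real^'n^'t \<Rightarrow> real^'n^'t" where
  "setcol k a A = (\<chi> t j. if j = k then a $ t else A $ t $ j)"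

text \<open>Joint probability of (x_1..x_T, x_{T+1} = k, x_o).\<close>
definition sample_prob :: "real^'n \<Rightarrow> real^'n^'n \<Rightarrow> real^'n^'t \<Rightarrow> ('t::finite \<Rightarrow> 'n::finite) \<Rightarrow> 'n \<Rightarrow> 'n \<Rightarrow> real" where
  "sample_prob mu P Q xs k xo =
     (\<Prod>t\<in>UNIV. mu $ xs t) * mu $ k * (\<Sum>t\<in>UNIV. Q $ t $ k * P $ xo $ xs t)"

definition expect :: "real^'n \<Rightarrow> real^'n^'n \<Rightarrow> real^'n^'t
     \<Rightarrow> (('t::finite \<Rightarrow> 'n::finite) \<Rightarrow> 'n \<Rightarrow> 'n \<Rightarrow> 'b::real_vector) \<Rightarrow> 'b" where
  "expect mu P Q f = (\<Sum>xs\<in>UNIV. \<Sum>k\<in>UNIV. \<Sum>xo\<in>UNIV. sample_prob mu P Q xs k xo *\<^sub>R f xs k xo)"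

end

theory Submission
  imports Defs
begin

text \<open>Both gradients are of the form \<open>L (u - e\<^sub>x\<^sub>o)\<close> with \<open>L\<close> linear, so averaging over
  \<open>x\<^sub>o\<close> replaces \<open>e\<^sub>x\<^sub>o\<close> by its conditional mean \<open>P X q\<^sub>k\<close>
  (\<open>q\<^sub>k\<close> the \<open>k\<close>-th column of \<open>Q\<close>). What remains is an expectation over
  the i.i.d. context, which only involves second moments of the one-hot data matrix \<open>X\<close>:
  two equal positions see one token of law \<open>\<mu>\<close>, two distinct positions see independent tokens.
  Hence \<open>E[(X b)(X c)\<^sup>T] = (b\<cdot>c) diag \<mu> + (\<Sigma>b \<Sigma>c - b\<cdot>c) \<mu> \<mu>\<^sup>T\<close> and
  \<open>E[X\<^sup>T M\<^sup>T M' X]\<close> has diagonal \<open>\<langle>M, M'\<rangle>\<^sub>\<mu>\<close> and off-diagonal \<open>(M \<mu>)\<cdot>(M' \<mu>)\<close>.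
  Stationarity \<open>V \<mu> = P \<mu> = \<mu>\<close> and the unit column sums of \<open>A\<close> and \<open>Q\<close> then give the formulas.\<close>

lemma grad_half_norm_sq:
  fixes L :: "'a::euclidean_space \<Rightarrow> 'b::real_inner"
  assumes lin: "linear L" and adj: "\<And>h. inner (L h) (L x - c) = inner h D"
  shows "grad (\<lambda>y. (1/2) * (norm (c - L y))^2) x = D"
proof -
  have "(L has_derivative L) (at x)"
    using lin by (simp add: linear_conv_bounded_linear bounded_linear_imp_has_derivative)
  then have "((\<lambda>y. (1/2) * inner (c - L y) (c - L y)) has_derivative
        (\<lambda>h. (1/2) * (inner (c - L x) (- L h) + inner (- L h) (c - L x)))) (at x)"
    by (auto intro!: derivative_eq_intros)
  then have "((\<lambda>y. (1/2) * inner (c - L y) (c - L y)) has_derivative (\<lambda>h. inner h D)) (at x)"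
    by (rule has_derivative_eq_rhs)
      (auto simp: fun_eq_iff inner_commute algebra_simps adj[symmetric] inner_diff_right)
  then have G: "GDERIV (\<lambda>y. (1/2) * (norm (c - L y))^2) x :> D"
    by (simp add: gderiv_def power2_norm_eq_inner)
  have "D' = D" if "GDERIV (\<lambda>y. (1/2) * (norm (c - L y))^2) x :> D'" for D'
  proof -
    have "(\<lambda>h. inner h D') = (\<lambda>h. inner h D)"
      using has_derivative_unique that G unfolding gderiv_def by blast
    then have "inner (D' - D) D' = inner (D' - D) D" by metis
    then have "inner (D' - D) (D' - D) = 0" by (simp add: inner_diff_right)
    then show ?thesis by simp
  qed
  with G show ?thesis unfolding grad_def by (rule the_equality)
qed

lemma sum_mult_if_eq:
  fixes a :: "'t::finite \<Rightarrow> real"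
  shows "(\<Sum>s\<in>UNIV. a s * (if t = s then x else y)) = a t * x + (sum a UNIV - a t) * y"
proof -
  have "(\<Sum>s\<in>UNIV. a s * (if t = s then x else y)) = (\<Sum>s\<in>UNIV. a s * y + (if t = s then a s * (x - y) else 0))"
    by (intro sum.cong) (auto simp: algebra_simps)
  then show ?thesis by (simp add: sum.distrib sum_distrib_left algebra_simps)
qed

lemma sum_sum_mult_if_eq:
  fixes b c :: "'t::finite \<Rightarrow> real"
  shows "(\<Sum>t\<in>UNIV. \<Sum>s\<in>UNIV. b t * c s * (if t = s then x else y)) =
    (\<Sum>t\<in>UNIV. b t * c t) * x + (sum b UNIV * sum c UNIV - (\<Sum>t\<in>UNIV. b t * c t)) * y"
proof -
  have "(\<Sum>t\<in>UNIV. \<Sum>s\<in>UNIV. b t * c s * (if t = s then x else y)) =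
      (\<Sum>t\<in>UNIV. b t * (c t * x + (sum c UNIV - c t) * y))"
    by (simp add: mult.assoc sum_mult_if_eq flip: sum_distrib_left)
  also have "\<dots> = (\<Sum>t\<in>UNIV. b t * c t) * x + (\<Sum>t\<in>UNIV. b t * sum c UNIV - b t * c t) * y"
    by (simp add: sum.distrib sum_subtractf sum_distrib_left algebra_simps)
  finally show ?thesis
    by (simp add: sum_subtractf sum_distrib_right)
qed

definition iid_expect :: "real^'n \<Rightarrow> (('t::finite \<Rightarrow> 'n::finite) \<Rightarrow> 'b::real_vector) \<Rightarrow> 'b" where
  "iid_expect mu F = (\<Sum>xs\<in>UNIV. (\<Prod>t\<in>UNIV. mu $ xs t) *\<^sub>R F xs)"

lemma iid_expect_diff: "iid_expect mu (\<lambda>xs. F xs - G xs) = iid_expect mu F - iid_expect mu G"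
  by (simp add: iid_expect_def scaleR_diff_right sum_subtractf)

lemma iid_expect_sum: "iid_expect mu (\<lambda>xs. \<Sum>a\<in>S. F a xs) = (\<Sum>a\<in>S. iid_expect mu (F a))"
  by (simp add: iid_expect_def scaleR_sum_right sum.swap[of _ S])

lemma iid_expect_mult_left:
  fixes F :: "('t::finite \<Rightarrow> 'n::finite) \<Rightarrow> real"
  shows "iid_expect mu (\<lambda>xs. c * F xs) = c * iid_expect mu F"
  by (simp add: iid_expect_def sum_distrib_left mult_ac real_scaleR_def)

lemma iid_expect_vec_nth: "iid_expect mu F $ i = iid_expect mu (\<lambda>xs. F xs $ i)"
  by (simp add: iid_expect_def sum_component)

lemma sum_fun_prod_eq_prod_sum:
  fixes w :: "'t::finite \<Rightarrow> 'n::finite \<Rightarrow> real"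
  shows "(\<Sum>xs\<in>UNIV. \<Prod>t\<in>UNIV. w t (xs t)) = (\<Prod>t\<in>UNIV. \<Sum>i\<in>UNIV. w t i)"
  using prod_sum_PiE[of "UNIV::'t set" "\<lambda>_. UNIV::'n set" w] by simp

lemma iid_expect_pair:
  fixes f g :: "'n::finite \<Rightarrow> real" and t s :: "'t::finite"
  assumes mu_sum: "(\<Sum>i\<in>UNIV. mu $ i) = 1"
  shows "iid_expect mu (\<lambda>xs. f (xs t) * g (xs s)) =
    (if t = s then (\<Sum>i\<in>UNIV. mu $ i * (f i * g i))
     else (\<Sum>i\<in>UNIV. mu $ i * f i) * (\<Sum>i\<in>UNIV. mu $ i * g i))"
proof -
  \<comment> \<open>Both cases factor over positions; each position contributes its marginal sum, which is 1 except at \<open>t\<close> and \<open>s\<close>.\<close>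
  define w where "w t' i = mu $ i * (if t' = t then f i else 1) * (if t' = s then g i else 1)" for t' i
  have "(\<Prod>t'\<in>UNIV. mu $ xs t') * (f (xs t) * g (xs s)) = (\<Prod>t'\<in>UNIV. w t' (xs t'))" for xs
    by (simp add: w_def prod.distrib prod.delta)
  then have "iid_expect mu (\<lambda>xs. f (xs t) * g (xs s)) = (\<Prod>t'\<in>UNIV. \<Sum>i\<in>UNIV. w t' i)"
    by (simp add: iid_expect_def sum_fun_prod_eq_prod_sum)
  also have "\<dots> = (if t = s then (\<Sum>i\<in>UNIV. mu $ i * (f i * g i))
      else (\<Sum>i\<in>UNIV. mu $ i * f i) * (\<Sum>i\<in>UNIV. mu $ i * g i))"
  proof (cases "t = s")
    case True
    then have "(\<Sum>i\<in>UNIV. w t' i) = (if t' = t then \<Sum>i\<in>UNIV. mu $ i * (f i * g i) else 1)" for t'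
      using mu_sum by (simp add: w_def mult.assoc)
    with True show ?thesis by (simp add: prod.delta)
  next
    case False
    then have "(\<Sum>i\<in>UNIV. w t' i) =
        (if t' = t then \<Sum>i\<in>UNIV. mu $ i * f i else 1) * (if t' = s then \<Sum>i\<in>UNIV. mu $ i * g i else 1)" for t'
      using mu_sum by (simp add: w_def)
    with False show ?thesis by (simp add: prod.distrib prod.delta)
  qed
  finally show ?thesis .
qed

lemma datamat_mv_nth: "(datamat xs *v b) $ i = (\<Sum>t\<in>UNIV. if xs t = i then b $ t else 0)"
  by (simp add: datamat_def matrix_vector_mult_def if_distrib if_distribR cong: if_cong)

lemma mv_datamat_mv_nth: "(M *v (datamat xs *v b)) $ n = (\<Sum>t\<in>UNIV. b $ t * M $ n $ xs t)"
proof -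
  have "(M *v (datamat xs *v b)) $ n = (\<Sum>i\<in>UNIV. \<Sum>t\<in>UNIV. if xs t = i then b $ t * M $ n $ i else 0)"
    by (subst matrix_vector_mult_def) (simp add: datamat_mv_nth sum_distrib_left mult_ac if_distrib cong: if_cong)
  also have "\<dots> = (\<Sum>t\<in>UNIV. b $ t * M $ n $ xs t)"
    by (subst sum.swap) (simp add: sum.delta)
  finally show ?thesis .
qed

lemma transpose_datamat_mv_nth: "(transpose (datamat xs) *v y) $ t = y $ xs t"
  by (simp add: datamat_def transpose_def matrix_vector_mult_def if_distrib if_distribR cong: if_cong)

lemma sum_datamat_mv: "(\<Sum>i\<in>UNIV. (datamat xs *v b) $ i) = (\<Sum>t\<in>UNIV. b $ t)"
  unfolding datamat_mv_nth by (subst sum.swap) (simp add: sum.delta)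

lemma sum_stochastic_mv:
  assumes "\<forall>j. (\<Sum>i\<in>UNIV. P $ i $ j) = (1::real)"
  shows "(\<Sum>i\<in>UNIV. (P *v v) $ i) = (\<Sum>j\<in>UNIV. v $ j)"
  using assms by (simp add: matrix_vector_mult_def sum.swap[of _ UNIV] flip: sum_distrib_right)

lemma sum_mult_row_eq_mv_nth:
  fixes M :: "real^'n::finite^'m::finite"
  shows "(\<Sum>i\<in>UNIV. mu $ i * M $ n $ i) = (M *v mu) $ n"
  by (auto simp: matrix_vector_mult_def mult.commute intro: sum.cong)

lemma iid_expect_outer_datamat:
  fixes M :: "real^'n::finite^'m::finite" and b c :: "real^'t::finite"
  assumes mu_sum: "(\<Sum>i\<in>UNIV. mu $ i) = 1"
  shows "iid_expect mu (\<lambda>xs. outerv (M *v (datamat xs *v b)) (datamat xs *v c)) =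
    inner b c *\<^sub>R (M ** diagv mu)
    + ((\<Sum>t\<in>UNIV. b $ t) * (\<Sum>t\<in>UNIV. c $ t) - inner b c) *\<^sub>R outerv (M *v mu) mu"
proof -
  have entry: "outerv (M *v (datamat xs *v b)) (datamat xs *v c) $ n $ j =
      (\<Sum>t\<in>UNIV. \<Sum>s\<in>UNIV. b $ t * c $ s * (M $ n $ xs t * (if xs s = j then 1 else 0)))" for xs n j
    unfolding outerv_def vec_lambda_beta mv_datamat_mv_nth datamat_mv_nth sum_product
    by (intro sum.cong) auto
  have pair: "iid_expect mu (\<lambda>xs. M $ n $ xs t * (if xs s = j then 1 else 0)) =
      (if t = s then M $ n $ j * mu $ j else (M *v mu) $ n * mu $ j)" for n j t s
    using iid_expect_pair[OF mu_sum, of "\<lambda>i. M $ n $ i" t "\<lambda>i. if i = j then 1 else 0" s]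
    by (simp add: sum_mult_row_eq_mv_nth if_distrib mult_ac cong: if_cong)
  have "iid_expect mu (\<lambda>xs. outerv (M *v (datamat xs *v b)) (datamat xs *v c)) $ n $ j =
      inner b c * (M $ n $ j * mu $ j)
      + ((\<Sum>t\<in>UNIV. b $ t) * (\<Sum>t\<in>UNIV. c $ t) - inner b c) * ((M *v mu) $ n * mu $ j)" for n j
  proof -
    have "iid_expect mu (\<lambda>xs. outerv (M *v (datamat xs *v b)) (datamat xs *v c)) $ n $ j =
        (\<Sum>t\<in>UNIV. \<Sum>s\<in>UNIV. b $ t * c $ s *
          (if t = s then M $ n $ j * mu $ j else (M *v mu) $ n * mu $ j))"
      by (simp add: iid_expect_vec_nth entry iid_expect_sum iid_expect_mult_left pair)
    then show ?thesis
      unfolding sum_sum_mult_if_eq[of "\<lambda>t. b $ t" "\<lambda>s. c $ s"] by (simp add: inner_vec_def)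
  qed
  then show ?thesis
    by (simp add: vec_eq_iff outerv_def diagv_def matrix_matrix_mult_def if_distrib cong: if_cong)
qed

lemma muinner_eq_sum: "muinner mu M M' = (\<Sum>r\<in>UNIV. \<Sum>i\<in>UNIV. mu $ i * (M $ r $ i * M' $ r $ i))"
  unfolding muinner_def trace_def
  by (simp add: matrix_matrix_mult_def diagv_def transpose_def if_distrib if_distribR
      sum.delta' mult_ac cong: if_cong)

lemma muinner_eq_sum_column:
  "muinner mu M M' = (\<Sum>k\<in>UNIV. mu $ k * inner (column k M) (column k M'))"
  unfolding muinner_eq_sum inner_vec_def column_def
  by (subst sum.swap) (simp add: sum_distrib_left)

lemma transpose_mv_nth: "(transpose M *v r) $ i = (\<Sum>n\<in>UNIV. M $ n $ i * r $ n)"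
  by (simp add: matrix_vector_mult_def transpose_def)

lemma iid_expect_gram_datamat:
  fixes M M' :: "real^'n::finite^'m::finite" and b :: "real^'t::finite"
  assumes mu_sum: "(\<Sum>i\<in>UNIV. mu $ i) = 1"
  shows "iid_expect mu (\<lambda>xs. transpose (datamat xs) *v (transpose M *v (M' *v (datamat xs *v b)))) =
    muinner mu M M' *\<^sub>R b + inner (M *v mu) (M' *v mu) *\<^sub>R ((\<chi> t. \<Sum>s\<in>UNIV. b $ s) - b)"
proof -
  have entry: "(transpose (datamat xs) *v (transpose M *v (M' *v (datamat xs *v b)))) $ t =
      (\<Sum>s\<in>UNIV. b $ s * (\<Sum>n\<in>UNIV. M $ n $ xs t * M' $ n $ xs s))" for xs t
  proof -
    have "(transpose (datamat xs) *v (transpose M *v (M' *v (datamat xs *v b)))) $ t =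
        (\<Sum>n\<in>UNIV. \<Sum>s\<in>UNIV. b $ s * (M $ n $ xs t * M' $ n $ xs s))"
      unfolding transpose_datamat_mv_nth unfolding transpose_mv_nth mv_datamat_mv_nth
      by (simp add: sum_distrib_left mult_ac)
    then show ?thesis
      by (subst (asm) sum.swap) (simp add: sum_distrib_left)
  qed
  have pair: "iid_expect mu (\<lambda>xs. M $ n $ xs t * M' $ n $ xs s) =
      (if t = s then \<Sum>i\<in>UNIV. mu $ i * (M $ n $ i * M' $ n $ i) else (M *v mu) $ n * (M' *v mu) $ n)"
    for n t s
    using iid_expect_pair[OF mu_sum, of "\<lambda>i. M $ n $ i" t "\<lambda>i. M' $ n $ i" s]
    by (simp add: sum_mult_row_eq_mv_nth)
  have pair_sum: "(\<Sum>n\<in>UNIV. iid_expect mu (\<lambda>xs. M $ n $ xs t * M' $ n $ xs s)) =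
      (if t = s then muinner mu M M' else inner (M *v mu) (M' *v mu))" for t s
    by (cases "t = s") (simp_all add: pair muinner_eq_sum inner_vec_def)
  have "iid_expect mu (\<lambda>xs. transpose (datamat xs) *v (transpose M *v (M' *v (datamat xs *v b)))) $ t =
      (\<Sum>s\<in>UNIV. b $ s * (if t = s then muinner mu M M' else inner (M *v mu) (M' *v mu)))" for t
    unfolding iid_expect_vec_nth entry by (simp add: iid_expect_sum iid_expect_mult_left pair_sum)
  then show ?thesis
    by (simp add: vec_eq_iff sum_mult_if_eq[of "\<lambda>s. b $ s"] algebra_simps)
qed

lemma sample_prob_eq:
  "sample_prob mu P Q xs k xo = (\<Prod>t\<in>UNIV. mu $ xs t) * mu $ k * (P *v (datamat xs *v column k Q)) $ xo"
  by (simp add: sample_prob_def mv_datamat_mv_nth column_def)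

lemma expect_eq_iid_expect:
  "expect mu P Q f = (\<Sum>k\<in>UNIV. mu $ k *\<^sub>R
     iid_expect mu (\<lambda>xs. \<Sum>xo\<in>UNIV. (P *v (datamat xs *v column k Q)) $ xo *\<^sub>R f xs k xo))"
  unfolding expect_def iid_expect_def sample_prob_eq
  by (subst sum.swap) (simp add: scaleR_sum_right mult_ac)

lemma sum_scaleR_linear_minus_axis:
  fixes L :: "real^'n::finite \<Rightarrow> 'b::real_vector"
  assumes L: "linear L"
  shows "(\<Sum>x\<in>UNIV. p $ x *\<^sub>R L (u - axis x 1)) = (\<Sum>x\<in>UNIV. p $ x) *\<^sub>R L u - L p"
proof -
  have "L p = L (\<Sum>x\<in>UNIV. p $ x *\<^sub>R axis x 1)"
    using basis_expansion[of p] by (simp add: scalar_mult_eq_scaleR)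
  also have "\<dots> = (\<Sum>x\<in>UNIV. p $ x *\<^sub>R L (axis x 1))"
    using L by (simp add: real_vector.linear_sum real_vector.linear_scale)
  finally show ?thesis
    using L by (simp add: real_vector.linear_diff scaleR_diff_right sum_subtractf scaleR_sum_left)
qed

lemma linear_outerv_left: "linear (\<lambda>u. outerv u v)"
  by (rule linearI) (simp_all add: outerv_def vec_eq_iff algebra_simps)

lemma linear_mv_left: "linear (\<lambda>W::real^'n^'m. W *v z)"
  by (rule linearI) (simp_all add: matrix_vector_mult_add_rdistrib scaleR_matrix_vector_assoc)

lemma grad_loss_matrix:
  fixes V :: "real^'n::finite^'n" and A :: "real^'n^'t::finite"
  shows "grad (\<lambda>W. loss W A xs k xo) V =
    outerv (V *v (datamat xs *v column k A) - axis xo 1) (datamat xs *v column k A)"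
proof -
  define z where "z = datamat xs *v column k A"
  have "(\<lambda>W. loss W A xs k xo) = (\<lambda>W. (1/2) * (norm (axis xo 1 - W *v z))^2)"
    by (simp add: loss_def fun_eq_iff z_def del: matrix_vector_mult_basis
        add: matrix_vector_mul_assoc[symmetric] matrix_vector_mult_basis[symmetric])
  moreover have "grad (\<lambda>W. (1/2) * (norm (axis xo 1 - W *v z))^2) V = outerv (V *v z - axis xo 1) z"
    by (rule grad_half_norm_sq[OF linear_mv_left])
      (simp add: inner_vec_def matrix_vector_mult_def outerv_def sum_distrib_right mult_ac)
  ultimately show ?thesis by (simp add: z_def)
qed

lemma column_setcol: "column x (setcol k a A) = (if x = k then a else column x A)"
  by (simp add: column_def setcol_def vec_eq_iff)

lemma setcol_mv_axis: "setcol k a A *v axis x 1 = (if x = k then a else A *v axis x 1)"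
  by (simp add: matrix_vector_mult_basis column_setcol)

lemma inner_mv_transpose:
  fixes h :: "real^'n::finite" and r :: "real^'m::finite"
  shows "inner (M *v h) r = inner h (transpose M *v r)"
  by (metis dot_lmul_matrix inner_commute vector_transpose_matrix transpose_transpose)

lemma grad_loss_column:
  fixes V :: "real^'n::finite^'n" and A :: "real^'n^'t::finite"
  shows "grad (\<lambda>a. loss V (setcol k a A) xs x xo) (column k A) =
    (if x = k then transpose (datamat xs) *v (transpose V *v (V *v (datamat xs *v column k A) - axis xo 1))
     else 0)"
proof (cases "x = k")
  case True
  define X where "X = datamat xs"
  have "(\<lambda>a. loss V (setcol k a A) xs x xo) = (\<lambda>a. (1/2) * (norm (axis xo 1 - V *v (X *v a)))^2)"
    using True by (simp add: loss_def fun_eq_iff X_def setcol_mv_axis del: matrix_vector_mult_basis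
        add: matrix_vector_mul_assoc[symmetric] matrix_vector_mult_basis[symmetric])
  moreover have "grad (\<lambda>a. (1/2) * (norm (axis xo 1 - V *v (X *v a)))^2) (column k A) =
      transpose X *v (transpose V *v (V *v (X *v column k A) - axis xo 1))"
  proof (rule grad_half_norm_sq)
    show "linear (\<lambda>a. V *v (X *v a))" by (simp add: matrix_vector_mul_assoc)
  qed (simp add: inner_mv_transpose)
  ultimately show ?thesis using True by (simp add: X_def)
next
  case False
  define c where "c = axis xo 1 - V *v (datamat xs *v column x A)"
  have "(\<lambda>a. loss V (setcol k a A) xs x xo) = (\<lambda>a. (1/2) * (norm (c - (\<lambda>_. 0::real^'n) a))^2)"
    using False by (simp add: loss_def fun_eq_iff c_def setcol_mv_axis del: matrix_vector_mult_basis
        add: matrix_vector_mul_assoc[symmetric] matrix_vector_mult_basis[symmetric])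
  moreover have "grad (\<lambda>a::real^'t. (1/2) * (norm (c - (\<lambda>_. 0::real^'n) a))^2) (column k A) = 0"
    by (rule grad_half_norm_sq) (simp_all add: linear_zero)
  ultimately show ?thesis using False by simp
qed

lemma sum_next_token_distribution:
  assumes P_col: "\<forall>j. (\<Sum>i\<in>UNIV. P $ i $ j) = (1::real)" and q_sum: "(\<Sum>t\<in>UNIV. q $ t) = 1"
  shows "(\<Sum>i\<in>UNIV. (P *v (datamat xs *v q)) $ i) = 1"
  using q_sum by (simp add: sum_stochastic_mv[OF P_col] sum_datamat_mv)

lemma iid_expect_grad_loss_matrix:
  fixes mu :: "real^'n::finite" and P V :: "real^'n^'n" and Q A :: "real^'n^'t::finite"
  assumes mu_sum: "(\<Sum>i\<in>UNIV. mu $ i) = 1"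
    and P_col: "\<forall>j. (\<Sum>i\<in>UNIV. P $ i $ j) = 1" and P_mu: "P *v mu = mu" and V_mu: "V *v mu = mu"
    and q_sum: "(\<Sum>t\<in>UNIV. Q $ t $ k) = 1" and a_sum: "(\<Sum>t\<in>UNIV. A $ t $ k) = 1"
  defines "a \<equiv> column k A" and "q \<equiv> column k Q"
  shows "iid_expect mu (\<lambda>xs. \<Sum>xo\<in>UNIV. (P *v (datamat xs *v q)) $ xo *\<^sub>R grad (\<lambda>W. loss W A xs k xo) V) =
      inner a a *\<^sub>R (V ** diagv mu) + (1 - inner a a) *\<^sub>R outerv mu mu
    - inner q a *\<^sub>R (P ** diagv mu) - (1 - inner q a) *\<^sub>R outerv mu mu"
proof -
  have a_sum': "(\<Sum>t\<in>UNIV. a $ t) = 1" and q_sum': "(\<Sum>t\<in>UNIV. q $ t) = 1"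
    using a_sum q_sum by (simp_all add: a_def q_def column_def)
  have "(\<Sum>xo\<in>UNIV. (P *v (datamat xs *v q)) $ xo *\<^sub>R grad (\<lambda>W. loss W A xs k xo) V) =
      outerv (V *v (datamat xs *v a)) (datamat xs *v a) - outerv (P *v (datamat xs *v q)) (datamat xs *v a)"
    for xs
    using sum_scaleR_linear_minus_axis[OF linear_outerv_left, of "P *v (datamat xs *v q)"]
      sum_next_token_distribution[OF P_col q_sum']
    by (simp add: grad_loss_matrix flip: a_def)
  then show ?thesis
    using a_sum' q_sum'
    by (simp add: iid_expect_diff iid_expect_outer_datamat[OF mu_sum] P_mu V_mu inner_commute)
qed

lemma iid_expect_grad_loss_column:
  fixes mu :: "real^'n::finite" and P V :: "real^'n^'n" and Q A :: "real^'n^'t::finite"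
  assumes mu_sum: "(\<Sum>i\<in>UNIV. mu $ i) = 1"
    and P_col: "\<forall>j. (\<Sum>i\<in>UNIV. P $ i $ j) = 1" and P_mu: "P *v mu = mu" and V_mu: "V *v mu = mu"
    and q_sum: "(\<Sum>t\<in>UNIV. Q $ t $ k) = 1" and a_sum: "(\<Sum>t\<in>UNIV. A $ t $ k) = 1"
  defines "a \<equiv> column k A" and "q \<equiv> column k Q"
  shows "iid_expect mu (\<lambda>xs. \<Sum>xo\<in>UNIV. (P *v (datamat xs *v q)) $ xo *\<^sub>R
        grad (\<lambda>a. loss V (setcol k a A) xs k xo) a) =
      (muinner mu V V - (norm mu)^2) *\<^sub>R a + (norm mu)^2 *\<^sub>R (\<chi> t. 1)
    - muinner mu V P *\<^sub>R q - (norm mu)^2 *\<^sub>R ((\<chi> t. 1) - q)"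
proof -
  have a_sum': "(\<Sum>t\<in>UNIV. a $ t) = 1" and q_sum': "(\<Sum>t\<in>UNIV. q $ t) = 1"
    using a_sum q_sum by (simp_all add: a_def q_def column_def)
  define L where "L xs v = transpose (datamat xs) *v (transpose V *v v)" for xs :: "'t \<Rightarrow> 'n" and v
  have lin: "linear (L xs)" for xs
    unfolding L_def matrix_vector_mul_assoc by (rule matrix_vector_mul_linear)
  have "grad (\<lambda>a. loss V (setcol k a A) xs k xo) a = L xs (V *v (datamat xs *v a) - axis xo 1)" for xs xo
    by (simp add: grad_loss_column L_def a_def)
  then have "(\<Sum>xo\<in>UNIV. (P *v (datamat xs *v q)) $ xo *\<^sub>R grad (\<lambda>a. loss V (setcol k a A) xs k xo) a) =
      L xs (V *v (datamat xs *v a)) - L xs (P *v (datamat xs *v q))"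
    for xs
    by (simp add: sum_scaleR_linear_minus_axis[OF lin] sum_next_token_distribution[OF P_col q_sum'])
  then have "iid_expect mu (\<lambda>xs. \<Sum>xo\<in>UNIV. (P *v (datamat xs *v q)) $ xo *\<^sub>R
        grad (\<lambda>a. loss V (setcol k a A) xs k xo) a) =
      iid_expect mu (\<lambda>xs. L xs (V *v (datamat xs *v a))) - iid_expect mu (\<lambda>xs. L xs (P *v (datamat xs *v q)))"
    by (simp add: iid_expect_diff)
  also have "\<dots> = (muinner mu V V - (norm mu)^2) *\<^sub>R a + (norm mu)^2 *\<^sub>R (\<chi> t. 1)
    - muinner mu V P *\<^sub>R q - (norm mu)^2 *\<^sub>R ((\<chi> t. 1) - q)"
    unfolding L_def iid_expect_gram_datamat[OF mu_sum]
    using a_sum' q_sum' by (simp add: P_mu V_mu power2_norm_eq_inner algebra_simps)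
  finally show ?thesis .
qed

lemma expect_grad_loss_matrix:
  fixes mu :: "real^'n::finite" and P V :: "real^'n^'n" and Q A :: "real^'n^'t::finite"
  assumes mu_sum: "(\<Sum>i\<in>UNIV. mu $ i) = 1"
    and P_col: "\<forall>j. (\<Sum>i\<in>UNIV. P $ i $ j) = 1" and P_mu: "P *v mu = mu" and V_mu: "V *v mu = mu"
    and Q_col: "\<forall>k. (\<Sum>t\<in>UNIV. Q $ t $ k) = 1" and A_col: "\<forall>k. (\<Sum>t\<in>UNIV. A $ t $ k) = 1"
  shows "expect mu P Q (\<lambda>xs k xo. grad (\<lambda>W. loss W A xs k xo) V) =
      muinner mu A A *\<^sub>R (V ** diagv mu - outerv mu mu) - muinner mu Q A *\<^sub>R (P ** diagv mu - outerv mu mu)"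
proof -
  let ?D = "\<lambda>M. M ** diagv mu - outerv mu mu"
  have "iid_expect mu (\<lambda>xs. \<Sum>xo\<in>UNIV. (P *v (datamat xs *v column k Q)) $ xo *\<^sub>R
      grad (\<lambda>W. loss W A xs k xo) V) =
      inner (column k A) (column k A) *\<^sub>R ?D V - inner (column k Q) (column k A) *\<^sub>R ?D P" for k
    using iid_expect_grad_loss_matrix[OF mu_sum P_col P_mu V_mu, of Q k A] Q_col A_col
    by (simp add: algebra_simps)
  then have "expect mu P Q (\<lambda>xs k xo. grad (\<lambda>W. loss W A xs k xo) V) =
      (\<Sum>k\<in>UNIV. mu $ k *\<^sub>R (inner (column k A) (column k A) *\<^sub>R ?D V
        - inner (column k Q) (column k A) *\<^sub>R ?D P))"
    by (simp only: expect_eq_iid_expect)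
  then show ?thesis
    by (simp add: muinner_eq_sum_column scaleR_right_diff_distrib sum_subtractf scaleR_sum_left)
qed

lemma expect_grad_loss_column:
  fixes mu :: "real^'n::finite" and P V :: "real^'n^'n" and Q A :: "real^'n^'t::finite"
  assumes mu_sum: "(\<Sum>i\<in>UNIV. mu $ i) = 1"
    and P_col: "\<forall>j. (\<Sum>i\<in>UNIV. P $ i $ j) = 1" and P_mu: "P *v mu = mu" and V_mu: "V *v mu = mu"
    and Q_col: "\<forall>k. (\<Sum>t\<in>UNIV. Q $ t $ k) = 1" and A_col: "\<forall>k. (\<Sum>t\<in>UNIV. A $ t $ k) = 1"
  shows "expect mu P Q (\<lambda>xs x xo. grad (\<lambda>a. loss V (setcol k a A) xs x xo) (column k A)) =
      (mu $ k * (muinner mu V V - (norm mu)^2)) *\<^sub>R column k A + (mu $ k * (norm mu)^2) *\<^sub>R (\<chi> t. 1)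
    - (mu $ k * muinner mu V P) *\<^sub>R column k Q - (mu $ k * (norm mu)^2) *\<^sub>R ((\<chi> t. 1) - column k Q)"
proof -
  have "iid_expect mu (\<lambda>xs. \<Sum>xo\<in>UNIV. (P *v (datamat xs *v column x Q)) $ xo *\<^sub>R
      grad (\<lambda>a. loss V (setcol k a A) xs x xo) (column k A)) = 0" if "x \<noteq> k" for x
    using that by (simp add: grad_loss_column iid_expect_def)
  then have "expect mu P Q (\<lambda>xs x xo. grad (\<lambda>a. loss V (setcol k a A) xs x xo) (column k A)) =
      mu $ k *\<^sub>R iid_expect mu (\<lambda>xs. \<Sum>xo\<in>UNIV. (P *v (datamat xs *v column k Q)) $ xo *\<^sub>R
        grad (\<lambda>a. loss V (setcol k a A) xs k xo) (column k A))"
    unfolding expect_eq_iid_expect by (subst sum.mono_neutral_left[of UNIV "{k}", symmetric]) auto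
  then show ?thesis
    using Q_col A_col
    by (simp add: iid_expect_grad_loss_column[OF mu_sum P_col P_mu V_mu] algebra_simps)
qed

theorem lemmaB7:
  fixes mu :: "real^'n::finite"
    and P V :: "real^'n^'n"
    and Q A :: "real^'n^'t::finite"
  assumes P_nonneg: "\<forall>i j. P $ i $ j \<ge> 0"
    and P_col: "\<forall>j. (\<Sum>i\<in>UNIV. P $ i $ j) = 1"
    and mu_nonneg: "\<forall>i. mu $ i \<ge> 0"
    and mu_sum: "(\<Sum>i\<in>UNIV. mu $ i) = 1"
    and P_mu: "P *v mu = mu"
    and Q_nonneg: "\<forall>t k. Q $ t $ k \<ge> 0"
    and Q_col: "\<forall>k. (\<Sum>t\<in>UNIV. Q $ t $ k) = 1"
    and V_mu: "V *v mu = mu"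
    and A_col: "\<forall>k. (\<Sum>t\<in>UNIV. A $ t $ k) = 1"
  shows "expect mu P Q (\<lambda>xs k xo. grad (\<lambda>W. loss W A xs k xo) V) =
           muinner mu A A *\<^sub>R (V ** diagv mu)
         + (1 - muinner mu A A) *\<^sub>R outerv mu mu
         - muinner mu Q A *\<^sub>R (P ** diagv mu)
         - (1 - muinner mu Q A) *\<^sub>R outerv mu mu
       \<and> (\<forall>k. expect mu P Q (\<lambda>xs x xo. grad (\<lambda>a. loss V (setcol k a A) xs x xo) (column k A)) =
           (mu $ k * (muinner mu V V - (norm mu)^2)) *\<^sub>R column k A
         + (mu $ k * (norm mu)^2) *\<^sub>R (\<chi> t. 1)
         - (mu $ k * muinner mu V P) *\<^sub>R column k Q
         - (mu $ k * (norm mu)^2) *\<^sub>R ((\<chi> t. 1) - column k Q))"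
proof (intro conjI allI)
  show "expect mu P Q (\<lambda>xs k xo. grad (\<lambda>W. loss W A xs k xo) V) =
      muinner mu A A *\<^sub>R (V ** diagv mu) + (1 - muinner mu A A) *\<^sub>R outerv mu mu
    - muinner mu Q A *\<^sub>R (P ** diagv mu) - (1 - muinner mu Q A) *\<^sub>R outerv mu mu"
    using expect_grad_loss_matrix[OF mu_sum P_col P_mu V_mu Q_col A_col] by (simp add: algebra_simps)
  show "expect mu P Q (\<lambda>xs x xo. grad (\<lambda>a. loss V (setcol k a A) xs x xo) (column k A)) =
      (mu $ k * (muinner mu V V - (norm mu)^2)) *\<^sub>R column k A + (mu $ k * (norm mu)^2) *\<^sub>R (\<chi> t. 1)
    - (mu $ k * muinner mu V P) *\<^sub>R column k Q - (mu $ k * (norm mu)^2) *\<^sub>R ((\<chi> t. 1) - column k Q)"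
    for k
    by (rule expect_grad_loss_column[OF mu_sum P_col P_mu V_mu Q_col A_col])
qed

end
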